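(* If $y^{(i_1)}$ and $y^{(i_2)}$ are two points lying in the same lap $I_j$, $1\le j\le n$, then $U\,V_\beta\,e_{i_1}=U\,V_\beta\,e_{i_2}$, where $e_i$ denotes the $i$-th standard basis vector of $\mathbb{R}^q$ (the vector representing $y^{(i)}$).
   Context: Setting. $I\subset\mathbb{R}$ compact interval; $f_i(x)=\rho_ix+\varrho_i$ ($i=1,\dots,n$), $0<|\rho_i|<1$, IFS with open set condition; $I$ is the union of a nonempty open interval $I_h$ (hole) and $f_1(I),\dots,f_n(I)$, with pairwise disjoint interiors and $I_h$ disjoint from the $f_i(I)$; $F(x)=f_i^{-1}(x)$ on $f_i(I)$. The laps $I_1,\dots,I_n$ (left to right) and the hole have endpoints $a_1<\dots<a_{n+2}$, hole $(a_h,a_{h+1})$; interior endpoints are turning/discontinuity points. Assume the forward orbit of every one-sided endpoint $a_i^\pm$ is finite. Points $y^{(1)},\dots,y^{(q)}$: the one-sided endpoints $a_1^+,a_2^-,a_2^+,\dots,a_{n+2}^-$ (with $a_i^-,a_i^+$ consecutive) together with all other points of their forward orbits, ordered along $I$. $V_\beta=[v_{ij}]$ ($q\times q$, $\beta\in\mathbb{R}$): if $F(y^{(j)})=y^{(i)}$, $v_{ij}=\varepsilon(y^{(j)})|F'(y^{(j)})|^{-\beta}$ with $\varepsilon$ the sign of $F'$ at $y^{(j)}$ (column zero for limits from inside the hole); for every pair of consecutive entries that are the two one-sided versions of a turning/discontinuity point between $y^{(j)}$ and $y^{(i)}$: if $y^{(i)}>y^{(j)}$, pair $y^{(k)},y^{(k+1)}$,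 $j\le k<i$, set $v_{kj}=v_{ij}$, $v_{k+1,j}=-v_{ij}$; if $y^{(i)}<y^{(j)}$, pair $y^{(k-1)},y^{(k)}$, $i<k\le j$, set $v_{k-1,j}=-v_{ij}$, $v_{kj}=v_{ij}$; all other entries $0$. $U$ is the $n\times q$ matrix with entry $(j,i)$ equal to $1$ if $y^{(i)}$ lies in lap $I_j$ and $0$ otherwise. *)

theory Defs
  imports Complex_Main "HOL-Library.Product_Lexorder" "Jordan_Normal_Form.Matrix"
begin

text \<open>Parameters: n laps; endpoints a 1 < ... < a (n+2); the hole is (a h, a (h+1));
  the affine maps f i x = rho i * x + varrho i (i = 1..n), indexed so that f i maps I onto
  the i-th lap (laps numbered left to right).\<close>

definition Ival :: "nat \<Rightarrow> (nat \<Rightarrow> real) \<Rightarrow> real set" where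
  "Ival n a = {a 1 .. a (n + 2)}"

definition hole :: "(nat \<Rightarrow> real) \<Rightarrow> nat \<Rightarrow> real set" where
  "hole a h = {a h <..< a (Suc h)}"

definition lapidx :: "nat \<Rightarrow> nat \<Rightarrow> nat" where
  "lapidx h j = (if j < h then j else Suc j)"

definition lap :: "(nat \<Rightarrow> real) \<Rightarrow> nat \<Rightarrow> nat \<Rightarrow> real set" where
  "lap a h j = {a (lapidx h j) .. a (Suc (lapidx h j))}"

definition ifs_with_hole ::
  "nat \<Rightarrow> (nat \<Rightarrow> real) \<Rightarrow> nat \<Rightarrow> (nat \<Rightarrow> real) \<Rightarrow> (nat \<Rightarrow> real) \<Rightarrow> bool" where
  "ifs_with_hole n a h \<rho> \<sigma> \<longleftrightarrow>
     1 \<le> n \<and> (\<forall>i\<in>{1..n+1}. a i < a (Suc i)) \<and> 1 \<le> h \<and> h \<le> n + 1 \<and>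
     (\<forall>i\<in>{1..n}. 0 < \<bar>\<rho> i\<bar> \<and> \<bar>\<rho> i\<bar> < 1 \<and>
        (\<lambda>x. \<rho> i * x + \<sigma> i) ` Ival n a = lap a h i) \<and>
     Ival n a = hole a h \<union> (\<Union>i\<in>{1..n}. lap a h i)"

text \<open>A one-sided point is a pair (x, s): s = True means x^+ (limit from the right),
  s = False means x^- (limit from the left). The lexicographic order on real \<times> bool
  orders points along I with x^- immediately before x^+.\<close>

type_synonym spoint = "real \<times> bool"

definition in_lap :: "nat \<Rightarrow> (nat \<Rightarrow> real) \<Rightarrow> nat \<Rightarrow> nat \<Rightarrow> spoint \<Rightarrow> bool" where
  "in_lap n a h j y \<longleftrightarrow> 1 \<le> j \<and> j \<le> n \<and>
     (if snd y then a (lapidx h j) \<le> fst y \<and> fst y < a (Suc (lapidx h j))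
      else a (lapidx h j) < fst y \<and> fst y \<le> a (Suc (lapidx h j)))"

definition lap_of :: "nat \<Rightarrow> (nat \<Rightarrow> real) \<Rightarrow> nat \<Rightarrow> spoint \<Rightarrow> nat" where
  "lap_of n a h y = (THE j. in_lap n a h j y)"

text \<open>The map F applied to a one-sided point (one-sided limit); undefined (None) for
  points not in any lap, i.e. limits from inside the hole.\<close>
definition Fside ::
  "nat \<Rightarrow> (nat \<Rightarrow> real) \<Rightarrow> nat \<Rightarrow> (nat \<Rightarrow> real) \<Rightarrow> (nat \<Rightarrow> real) \<Rightarrow> spoint \<Rightarrow> spoint option" where
  "Fside n a h \<rho> \<sigma> y =
     (if \<exists>j. in_lap n a h j y then
        (let j = lap_of n a h y in
         Some ((fst y - \<sigma> j) / \<rho> j, if \<rho> j > 0 then snd y else \<not> snd y))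
      else None)"

definition endpoints :: "nat \<Rightarrow> (nat \<Rightarrow> real) \<Rightarrow> spoint set" where
  "endpoints n a = {(a 1, True), (a (n + 2), False)} \<union> {(a k, s) | k s. 2 \<le> k \<and> k \<le> n + 1}"

inductive_set orbit_pts ::
  "nat \<Rightarrow> (nat \<Rightarrow> real) \<Rightarrow> nat \<Rightarrow> (nat \<Rightarrow> real) \<Rightarrow> (nat \<Rightarrow> real) \<Rightarrow> spoint set"
  for n a h \<rho> \<sigma> where
  base: "y \<in> endpoints n a \<Longrightarrow> y \<in> orbit_pts n a h \<rho> \<sigma>"
| step: "y \<in> orbit_pts n a h \<rho> \<sigma> \<Longrightarrow> Fside n a h \<rho> \<sigma> y = Some z \<Longrightarrow> z \<in> orbit_pts n a h \<rho> \<sigma>"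

text \<open>The points y^(1), ..., y^(q), ordered along I (0-based list: y^(i) = ypts ! (i-1)).\<close>
definition ypts ::
  "nat \<Rightarrow> (nat \<Rightarrow> real) \<Rightarrow> nat \<Rightarrow> (nat \<Rightarrow> real) \<Rightarrow> (nat \<Rightarrow> real) \<Rightarrow> spoint list" where
  "ypts n a h \<rho> \<sigma> = sorted_list_of_set (orbit_pts n a h \<rho> \<sigma>)"

text \<open>Entries k, k+1 of ys are the two one-sided versions a_m^-, a_m^+ of a
  turning/discontinuity point a_m (2 \<le> m \<le> n+1).\<close>
definition tpair :: "nat \<Rightarrow> (nat \<Rightarrow> real) \<Rightarrow> spoint list \<Rightarrow> nat \<Rightarrow> bool" where
  "tpair n a ys k \<longleftrightarrow> Suc k < length ys \<and>
     (\<exists>m\<in>{2..n+1}. ys ! k = (a m, False) \<and> ys ! Suc k = (a m, True))"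

definition ind :: "bool \<Rightarrow> real" where
  "ind b = (if b then 1 else 0)"

text \<open>Column j: value v at the row of F(y^(j)),
  plus the +-v entries at the turning/discontinuity pairs between y^(j) and F(y^(j));
  contributions at the same entry are added.\<close>
definition Vmat ::
  "real \<Rightarrow> nat \<Rightarrow> (nat \<Rightarrow> real) \<Rightarrow> nat \<Rightarrow> (nat \<Rightarrow> real) \<Rightarrow> (nat \<Rightarrow> real) \<Rightarrow> real mat" where
  "Vmat \<beta> n a h \<rho> \<sigma> =
     (let ys = ypts n a h \<rho> \<sigma>; q = length ys; tp = tpair n a ys in
      mat q q (\<lambda>(i, j).
        case Fside n a h \<rho> \<sigma> (ys ! j) of
          None \<Rightarrow> 0
        | Some z \<Rightarrow>
            (let i0 = (THE i. i < q \<and> ys ! i = z);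
                 r = \<rho> (lap_of n a h (ys ! j));
                 v = sgn (1 / r) * \<bar>1 / r\<bar> powr (- \<beta>)
             in v * (ind (i = i0) +
                  (if j < i0 then
                     ind (j \<le> i \<and> i < i0 \<and> tp i)
                     - ind (0 < i \<and> j \<le> i - 1 \<and> i - 1 < i0 \<and> tp (i - 1))
                   else if i0 < j then
                     ind (0 < i \<and> i0 < i \<and> i \<le> j \<and> tp (i - 1))
                     - ind (i0 < i + 1 \<and> i + 1 \<le> j \<and> tp i)
                   else 0)))))"

definition Umat ::
  "nat \<Rightarrow> (nat \<Rightarrow> real) \<Rightarrow> nat \<Rightarrow> (nat \<Rightarrow> real) \<Rightarrow> (nat \<Rightarrow> real) \<Rightarrow> real mat" where
  "Umat n a h \<rho> \<sigma> =
     (let ys = ypts n a h \<rho> \<sigma> in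
      mat n (length ys) (\<lambda>(r, c). ind (in_lap n a h (Suc r) (ys ! c))))"

end

theory Submission
  imports Defs
begin

(* Column i of V_beta is v_j (e_i0 + sum of +-(e_k - e_(k+1)) over the turning pairs k between
   y^(i) and y^(i0) = F(y^(i))), where v_j depends only on the lap I_j containing y^(i).  Row r of U
   is the indicator g of the lap I_(r+1), so (U V e_i)_r = v_j (g i0 + sum (g k - g (k+1))).  Because
   every one-sided endpoint is one of the y's, g is constant across consecutive points that do not
   form a turning pair; hence the sum telescopes to v_j g i, i.e. U V e_i = v_j e_j. *)

lemma strict_sorted_nothing_between:
  fixes ys :: "'a::linorder list"
  assumes "sorted_wrt (<) ys" "Suc k < length ys" "e \<in> set ys"
  shows "e \<le> ys ! k \<or> ys ! Suc k \<le> e"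
proof -
  obtain m where m: "m < length ys" "ys ! m = e" using assms(3) by (metis in_set_conv_nth)
  have "sorted ys" using assms(1) by (rule strict_sorted_imp_sorted)
  then show ?thesis
    using m assms(2) by (cases "m \<le> k") (auto intro: sorted_nth_mono)
qed

lemma sum_turning_differences:
  fixes g :: "nat \<Rightarrow> real"
  assumes "p \<le> r" "r < q" and const: "\<And>k. p \<le> k \<Longrightarrow> k < r \<Longrightarrow> \<not> tp k \<Longrightarrow> g (Suc k) = g k"
  shows "(\<Sum>c<q. g c * (ind (p \<le> c \<and> c < r \<and> tp c)
                         - ind (0 < c \<and> p \<le> c - 1 \<and> c - 1 < r \<and> tp (c - 1)))) = g p - g r"
proof -
  define T where "T = {k \<in> {p..<r}. tp k}"
  have "(\<Sum>c<q. g c * ind (p \<le> c \<and> c < r \<and> tp c))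
      = (\<Sum>c \<in> {c \<in> {..<q}. p \<le> c \<and> c < r \<and> tp c}. g c)"
    unfolding sum.inter_filter[OF finite_lessThan] by (rule sum.cong) (auto simp: ind_def)
  also have "{c \<in> {..<q}. p \<le> c \<and> c < r \<and> tp c} = T"
    using \<open>r < q\<close> by (auto simp: T_def)
  finally have left: "(\<Sum>c<q. g c * ind (p \<le> c \<and> c < r \<and> tp c)) = (\<Sum>k\<in>T. g k)" .
  have "(\<Sum>c<q. g c * ind (0 < c \<and> p \<le> c - 1 \<and> c - 1 < r \<and> tp (c - 1)))
      = (\<Sum>c \<in> {c \<in> {..<q}. 0 < c \<and> p \<le> c - 1 \<and> c - 1 < r \<and> tp (c - 1)}. g c)"
    unfolding sum.inter_filter[OF finite_lessThan] by (rule sum.cong) (auto simp: ind_def)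
  also have "{c \<in> {..<q}. 0 < c \<and> p \<le> c - 1 \<and> c - 1 < r \<and> tp (c - 1)} = Suc ` T"
    using \<open>r < q\<close> by (auto simp: T_def image_iff gr0_conv_Suc)
  also have "(\<Sum>c \<in> Suc ` T. g c) = (\<Sum>k\<in>T. g (Suc k))"
    by (simp add: sum.reindex)
  finally have right: "(\<Sum>c<q. g c * ind (0 < c \<and> p \<le> c - 1 \<and> c - 1 < r \<and> tp (c - 1)))
      = (\<Sum>k\<in>T. g (Suc k))" .
  have "(\<Sum>k\<in>T. g k - g (Suc k)) = (\<Sum>k=p..<r. g k - g (Suc k))"
    by (rule sum.mono_neutral_left) (auto simp: T_def const)
  also have "\<dots> = g p - g r"
    using sum_Suc_diff'[OF \<open>p \<le> r\<close>, of g] by (simp add: sum_subtractf)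
  finally show ?thesis
    unfolding right_diff_distrib sum_subtractf left right by (simp add: sum_subtractf)
qed

(* Entry i of column j of V_beta divided by v, where y^(i0) = F(y^(j)) and tp k marks the turning
   pairs (y^(k), y^(k+1)). *)
definition turning_column :: "(nat \<Rightarrow> bool) \<Rightarrow> nat \<Rightarrow> nat \<Rightarrow> nat \<Rightarrow> real" where
  "turning_column tp j i0 i = ind (i = i0) +
     (if j < i0 then
        ind (j \<le> i \<and> i < i0 \<and> tp i) - ind (0 < i \<and> j \<le> i - 1 \<and> i - 1 < i0 \<and> tp (i - 1))
      else if i0 < j then
        ind (0 < i \<and> i0 < i \<and> i \<le> j \<and> tp (i - 1)) - ind (i0 < i + 1 \<and> i + 1 \<le> j \<and> tp i)
      else 0)"

lemma sum_turning_column: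
  fixes g :: "nat \<Rightarrow> real"
  assumes "j < q" "i0 < q" and const: "\<And>k. Suc k < q \<Longrightarrow> \<not> tp k \<Longrightarrow> g (Suc k) = g k"
  shows "(\<Sum>i<q. g i * turning_column tp j i0 i) = g j"
proof -
  define D where "D p r i = ind (p \<le> i \<and> i < r \<and> tp i)
                         - ind (0 < i \<and> p \<le> i - 1 \<and> i - 1 < r \<and> tp (i - 1))" for p r i
  have sum_D: "(\<Sum>i<q. g i * D p r i) = g p - g r" if "p \<le> r" "r < q" for p r
    unfolding D_def using that const by (intro sum_turning_differences) auto
  have "(\<Sum>i<q. g i * ind (i = i0)) = g i0"
    using \<open>i0 < q\<close> by (simp add: ind_def if_distrib[of "\<lambda>x. _ * x"] cong: if_cong)
  moreover consider "j < i0" | "i0 < j" | "j = i0" by linarith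
  then have "(\<Sum>i<q. g i * (turning_column tp j i0 i - ind (i = i0))) = g j - g i0"
  proof cases
    case 1
    then show ?thesis
      using sum_D[of j i0] \<open>i0 < q\<close> by (simp add: turning_column_def D_def)
  next
    case 2
    have "turning_column tp j i0 i - ind (i = i0) = - D i0 j i" for i
      using 2 unfolding turning_column_def D_def by (auto simp: ind_def)
    then show ?thesis
      using sum_D[of i0 j] 2 \<open>j < q\<close> by (simp add: sum_negf)
  next
    case 3
    then show ?thesis by (simp add: turning_column_def)
  qed
  ultimately show ?thesis
    by (simp add: right_diff_distrib sum_subtractf)
qed

lemma ifs_with_hole_endpoint_less:
  assumes H: "ifs_with_hole n a h \<rho> \<sigma>" and "1 \<le> i" "i < i'" "i' \<le> n + 2"
  shows "a i < a i'"
proof -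
  have a_Suc: "a k < a (Suc k)" if "1 \<le> k" "k \<le> n + 1" for k
    using H that unfolding ifs_with_hole_def by auto
  from \<open>i < i'\<close> have "Suc i \<le> i'" by simp
  then show ?thesis
    using \<open>i' \<le> n + 2\<close>
  proof (induction rule: dec_induct)
    case base then show ?case using a_Suc \<open>1 \<le> i\<close> by simp
  next
    case (step k) then show ?case using a_Suc[of k] \<open>1 \<le> i\<close> by fastforce
  qed
qed

lemma ifs_with_hole_lapD:
  assumes "ifs_with_hole n a h \<rho> \<sigma>" "1 \<le> j" "j \<le> n"
  shows "\<rho> j \<noteq> 0" "(\<lambda>x. \<rho> j * x + \<sigma> j) ` Ival n a = lap a h j"
proof -
  have "j \<in> {1..n}" using assms(2,3) by simp
  then show "\<rho> j \<noteq> 0" "(\<lambda>x. \<rho> j * x + \<sigma> j) ` Ival n a = lap a h j"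
    using assms(1) unfolding ifs_with_hole_def by fastforce+
qed

lemma lapidx_bounds:
  assumes "ifs_with_hole n a h \<rho> \<sigma>" "1 \<le> j" "j \<le> n"
  shows "1 \<le> lapidx h j" "Suc (lapidx h j) \<le> n + 2"
  using assms unfolding ifs_with_hole_def lapidx_def by auto

lemma in_lap_iff_lex:
  "in_lap n a h j y \<longleftrightarrow>
     1 \<le> j \<and> j \<le> n \<and> (a (lapidx h j), True) \<le> y \<and> y \<le> (a (Suc (lapidx h j)), False)"
  by (cases y) (auto simp: in_lap_def)

lemma in_lap_imp_not_in_later_lap:
  assumes H: "ifs_with_hole n a h \<rho> \<sigma>" and "j < j'" "in_lap n a h j y"
  shows "\<not> in_lap n a h j' y"
proof
  assume y: "in_lap n a h j' y"
  have "Suc (lapidx h j) \<le> lapidx h j'"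
    using \<open>j < j'\<close> unfolding lapidx_def by auto
  then have "a (Suc (lapidx h j)) \<le> a (lapidx h j')"
    using ifs_with_hole_endpoint_less[OF H, of "Suc (lapidx h j)" "lapidx h j'"]
      lapidx_bounds[OF H, of j] lapidx_bounds[OF H, of j'] assms(3) y
    by (cases "Suc (lapidx h j) = lapidx h j'") (auto simp: in_lap_iff_lex)
  moreover have "(a (lapidx h j'), True) \<le> (a (Suc (lapidx h j)), False)"
    using assms(3) y unfolding in_lap_iff_lex by (meson order_trans)
  ultimately show False by auto
qed

lemma in_lap_unique:
  assumes "ifs_with_hole n a h \<rho> \<sigma>" "in_lap n a h j y" "in_lap n a h j' y"
  shows "j = j'"
  using in_lap_imp_not_in_later_lap[OF assms(1)] assms(2,3) by (metis linorder_neqE_nat)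

definition affine_inv_side :: "real \<Rightarrow> real \<Rightarrow> spoint \<Rightarrow> spoint" where
  "affine_inv_side r s y = ((fst y - s) / r, if 0 < r then snd y else \<not> snd y)"

lemma affine_inv_side_mono:
  assumes "0 < r" "p \<le> p'"
  shows "affine_inv_side r s p \<le> affine_inv_side r s p'"
  using assms by (cases p; cases p') (auto simp: affine_inv_side_def less_eq_prod_def divide_less_cancel)

lemma affine_inv_side_antimono:
  assumes "r < 0" "p \<le> p'"
  shows "affine_inv_side r s p' \<le> affine_inv_side r s p"
  using assms by (cases p; cases p') (auto simp: affine_inv_side_def less_eq_prod_def divide_less_cancel)

lemma Fside_in_lap:
  assumes "ifs_with_hole n a h \<rho> \<sigma>" "in_lap n a h j y"
  shows "Fside n a h \<rho> \<sigma> y = Some (affine_inv_side (\<rho> j) (\<sigma> j) y)"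
proof -
  have "lap_of n a h y = j"
    unfolding lap_of_def using in_lap_unique[OF assms(1)] assms(2) by blast
  then show ?thesis
    using assms(2) unfolding Fside_def affine_inv_side_def by auto
qed

lemma lap_ends_affine:
  assumes H: "ifs_with_hole n a h \<rho> \<sigma>" and j: "1 \<le> j" "j \<le> n"
  shows "0 < \<rho> j \<Longrightarrow>
           a (lapidx h j) = \<rho> j * a 1 + \<sigma> j \<and> a (Suc (lapidx h j)) = \<rho> j * a (n + 2) + \<sigma> j"
    and "\<rho> j < 0 \<Longrightarrow>
           a (lapidx h j) = \<rho> j * a (n + 2) + \<sigma> j \<and> a (Suc (lapidx h j)) = \<rho> j * a 1 + \<sigma> j"
  using ifs_with_hole_lapD(2)[OF H j] ifs_with_hole_endpoint_less[OF H, of 1 "n + 2"]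
  by (auto simp: Ival_def lap_def image_affinity_atLeastAtMost mult_left_mono mult_left_mono_neg)

lemma orbit_pts_bounds:
  assumes H: "ifs_with_hole n a h \<rho> \<sigma>" and "y \<in> orbit_pts n a h \<rho> \<sigma>"
  shows "(a 1, True) \<le> y \<and> y \<le> (a (n + 2), False)"
  using assms(2)
proof induction
  case (base y)
  have "a 1 < a k \<and> a k < a (n + 2)" if "2 \<le> k" "k \<le> n + 1" for k
    using that ifs_with_hole_endpoint_less[OF H] by simp
  moreover have "a 1 < a (n + 2)"
    using ifs_with_hole_endpoint_less[OF H, of 1 "n + 2"] by simp
  ultimately show ?case
    using base unfolding endpoints_def by auto
next
  case (step y z)
  then obtain j where j: "in_lap n a h j y"
    unfolding Fside_def by (auto split: if_splits)
  with step.hyps(2) have z: "z = affine_inv_side (\<rho> j) (\<sigma> j) y"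
    using Fside_in_lap[OF H] by simp
  from j have jn: "1 \<le> j" "j \<le> n" and
    y: "(a (lapidx h j), True) \<le> y" "y \<le> (a (Suc (lapidx h j)), False)"
    unfolding in_lap_iff_lex by auto
  have "\<rho> j \<noteq> 0"
    using ifs_with_hole_lapD(1)[OF H jn] .
  then consider "0 < \<rho> j" | "\<rho> j < 0" by linarith
  then show ?case
  proof cases
    case 1
    then show ?thesis
      using affine_inv_side_mono[OF 1 y(1), of "\<sigma> j"] affine_inv_side_mono[OF 1 y(2), of "\<sigma> j"]
        lap_ends_affine(1)[OF H jn 1] z
      by (simp add: affine_inv_side_def)
  next
    case 2
    then show ?thesis
      using affine_inv_side_antimono[OF 2 y(1), of "\<sigma> j"] affine_inv_side_antimono[OF 2 y(2), of "\<sigma> j"]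
        lap_ends_affine(2)[OF H jn 2] z
      by (simp add: affine_inv_side_def)
  qed
qed

lemma interior_endpoint_in_endpoints: "k \<in> {2..n + 1} \<Longrightarrow> (a k, s) \<in> endpoints n a"
  unfolding endpoints_def by auto

lemma spoint_between_sides:
  fixes p :: spoint
  shows "(x, False) \<le> p \<Longrightarrow> p < (x, True) \<Longrightarrow> p = (x, False)"
    and "(x, False) < p \<Longrightarrow> p \<le> (x, True) \<Longrightarrow> p = (x, True)"
  by (cases p; auto)+

lemma tpair_if_leaving_lap:
  assumes H: "ifs_with_hole n a h \<rho> \<sigma>" and S: "sorted_wrt (<) ys"
    and E: "endpoints n a \<subseteq> set ys" and upper: "\<And>y. y \<in> set ys \<Longrightarrow> y \<le> (a (n + 2), False)"
    and k: "Suc k < length ys"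
    and inside: "in_lap n a h r (ys ! k)" and outside: "\<not> in_lap n a h r (ys ! Suc k)"
  shows "tpair n a ys k"
proof -
  define B where "B = a (Suc (lapidx h r))"
  have r: "1 \<le> r" "r \<le> n" and yk: "(a (lapidx h r), True) \<le> ys ! k" "ys ! k \<le> (B, False)"
    using inside unfolding in_lap_iff_lex B_def by auto
  have "ys ! k < ys ! Suc k"
    using S k by (simp add: sorted_wrt_iff_nth_less)
  then have "(a (lapidx h r), True) \<le> ys ! Suc k"
    using yk(1) by order
  then have beyond: "(B, False) < ys ! Suc k"
    using outside r unfolding in_lap_iff_lex B_def by (simp add: not_le)
  then have "Suc (lapidx h r) \<noteq> n + 2"
    using upper[OF nth_mem[OF k]] unfolding B_def by auto
  then have m: "Suc (lapidx h r) \<in> {2..n + 1}"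
    using lapidx_bounds[OF H r] by auto
  then have "(B, False) \<in> set ys" "(B, True) \<in> set ys"
    using E interior_endpoint_in_endpoints[OF m] unfolding B_def by blast+
  then have "(B, False) \<le> ys ! k" "(B, True) \<le> ys ! k \<or> ys ! Suc k \<le> (B, True)"
    using strict_sorted_nothing_between[OF S k] beyond by (auto simp: not_le[symmetric])
  moreover from this(1) have "ys ! k = (B, False)"
    using yk(2) by (rule antisym[symmetric])
  ultimately have "ys ! k = (B, False)" "ys ! Suc k = (B, True)"
    using spoint_between_sides(2)[OF beyond] by auto
  then show ?thesis
    unfolding tpair_def B_def using k m by blast
qed

lemma tpair_if_entering_lap:
  assumes H: "ifs_with_hole n a h \<rho> \<sigma>" and S: "sorted_wrt (<) ys"
    and E: "endpoints n a \<subseteq> set ys" and lower: "\<And>y. y \<in> set ys \<Longrightarrow> (a 1, True) \<le> y"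
    and k: "Suc k < length ys"
    and outside: "\<not> in_lap n a h r (ys ! k)" and inside: "in_lap n a h r (ys ! Suc k)"
  shows "tpair n a ys k"
proof -
  define A where "A = a (lapidx h r)"
  have r: "1 \<le> r" "r \<le> n" and yk: "(A, True) \<le> ys ! Suc k" "ys ! Suc k \<le> (a (Suc (lapidx h r)), False)"
    using inside unfolding in_lap_iff_lex A_def by auto
  have "ys ! k < ys ! Suc k"
    using S k by (simp add: sorted_wrt_iff_nth_less)
  then have "ys ! k \<le> (a (Suc (lapidx h r)), False)"
    using yk(2) by order
  then have before: "ys ! k < (A, True)"
    using outside r unfolding in_lap_iff_lex A_def by (simp add: not_le)
  then have "lapidx h r \<noteq> 1"
    using lower[OF nth_mem[of k ys]] k unfolding A_def by auto
  then have m: "lapidx h r \<in> {2..n + 1}"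
    using lapidx_bounds[OF H r] by auto
  then have "(A, False) \<in> set ys" "(A, True) \<in> set ys"
    using E interior_endpoint_in_endpoints[OF m] unfolding A_def by blast+
  then have "(A, False) \<le> ys ! k \<or> ys ! Suc k \<le> (A, False)" "ys ! Suc k \<le> (A, True)"
    using strict_sorted_nothing_between[OF S k] before by (auto simp: not_le[symmetric])
  moreover from this(2) have "ys ! Suc k = (A, True)"
    using yk(1) by (rule antisym)
  ultimately have "ys ! k = (A, False)" "ys ! Suc k = (A, True)"
    using spoint_between_sides(1)[OF _ before] by auto
  then show ?thesis
    unfolding tpair_def A_def using k m by blast
qed

lemma in_lap_Suc_iff_if_not_tpair:
  assumes H: "ifs_with_hole n a h \<rho> \<sigma>" and S: "sorted_wrt (<) ys"
    and E: "endpoints n a \<subseteq> set ys"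
    and bounds: "\<And>y. y \<in> set ys \<Longrightarrow> (a 1, True) \<le> y \<and> y \<le> (a (n + 2), False)"
    and k: "Suc k < length ys" and "\<not> tpair n a ys k"
  shows "in_lap n a h r (ys ! Suc k) \<longleftrightarrow> in_lap n a h r (ys ! k)"
  using tpair_if_leaving_lap[OF H S E _ k] tpair_if_entering_lap[OF H S E _ k] bounds assms(6)
  by blast

lemma set_ypts: "finite (orbit_pts n a h \<rho> \<sigma>) \<Longrightarrow> set (ypts n a h \<rho> \<sigma>) = orbit_pts n a h \<rho> \<sigma>"
  by (simp add: ypts_def)

lemma sorted_ypts: "sorted_wrt (<) (ypts n a h \<rho> \<sigma>)"
  unfolding ypts_def by (rule strict_sorted_list_of_set)

lemma dim_Umat [simp]:
  "dim_row (Umat n a h \<rho> \<sigma>) = n" "dim_col (Umat n a h \<rho> \<sigma>) = length (ypts n a h \<rho> \<sigma>)"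
  by (simp_all add: Umat_def Let_def)

lemma dim_Vmat [simp]:
  "dim_row (Vmat \<beta> n a h \<rho> \<sigma>) = length (ypts n a h \<rho> \<sigma>)"
  "dim_col (Vmat \<beta> n a h \<rho> \<sigma>) = length (ypts n a h \<rho> \<sigma>)"
  by (simp_all add: Vmat_def Let_def)

lemma Umat_index:
  "r < n \<Longrightarrow> c < length (ypts n a h \<rho> \<sigma>) \<Longrightarrow>
     Umat n a h \<rho> \<sigma> $$ (r, c) = ind (in_lap n a h (Suc r) (ypts n a h \<rho> \<sigma> ! c))"
  by (simp add: Umat_def Let_def)

lemma Vmat_index_in_lap:
  fixes n h :: nat and a \<rho> \<sigma> :: "nat \<Rightarrow> real"
  defines "ys \<equiv> ypts n a h \<rho> \<sigma>"
  assumes H: "ifs_with_hole n a h \<rho> \<sigma>"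
    and "c < length ys" "i < length ys" and j: "in_lap n a h j (ys ! i)"
    and i0: "i0 < length ys" "ys ! i0 = affine_inv_side (\<rho> j) (\<sigma> j) (ys ! i)"
  shows "Vmat \<beta> n a h \<rho> \<sigma> $$ (c, i)
           = sgn (1 / \<rho> j) * \<bar>1 / \<rho> j\<bar> powr - \<beta> * turning_column (tpair n a ys) i i0 c"
proof -
  have "distinct ys"
    using sorted_ypts strict_sorted_iff unfolding ys_def by blast
  then have "(THE i'. i' < length ys \<and> ys ! i' = ys ! i0) = i0"
    using i0(1) nth_eq_iff_index_eq by blast
  moreover have "lap_of n a h (ys ! i) = j"
    unfolding lap_of_def using in_lap_unique[OF H] j by blast
  ultimately show ?thesis
    using assms(3,4) Fside_in_lap[OF H j] i0(2)
    unfolding Vmat_def Let_def ys_def[symmetric] turning_column_def by simp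
qed

lemma Umat_Vmat_unit_vec_nth:
  fixes n h :: nat and a \<rho> \<sigma> :: "nat \<Rightarrow> real"
  defines "ys \<equiv> ypts n a h \<rho> \<sigma>"
  assumes H: "ifs_with_hole n a h \<rho> \<sigma>" and fin: "finite (orbit_pts n a h \<rho> \<sigma>)"
    and i: "i < length ys" and j: "in_lap n a h j (ys ! i)" and r: "r < n"
  shows "(Umat n a h \<rho> \<sigma> * Vmat \<beta> n a h \<rho> \<sigma> *\<^sub>v unit_vec (length ys) i) $ r
           = sgn (1 / \<rho> j) * \<bar>1 / \<rho> j\<bar> powr - \<beta> * ind (in_lap n a h (Suc r) (ys ! i))"
proof -
  define v where "v = sgn (1 / \<rho> j) * \<bar>1 / \<rho> j\<bar> powr - \<beta>"
  define g where "g c = ind (in_lap n a h (Suc r) (ys ! c))" for c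
  have set_ys: "set ys = orbit_pts n a h \<rho> \<sigma>"
    using set_ypts[OF fin] unfolding ys_def .
  have "Fside n a h \<rho> \<sigma> (ys ! i) = Some (affine_inv_side (\<rho> j) (\<sigma> j) (ys ! i))"
    using Fside_in_lap[OF H j] .
  then have "affine_inv_side (\<rho> j) (\<sigma> j) (ys ! i) \<in> set ys"
    using orbit_pts.step i set_ys by (metis nth_mem)
  then obtain i0 where i0: "i0 < length ys" "ys ! i0 = affine_inv_side (\<rho> j) (\<sigma> j) (ys ! i)"
    by (metis in_set_conv_nth)
  have U: "Umat n a h \<rho> \<sigma> $$ (r, c) = g c" if "c < length ys" for c
    using Umat_index[OF r] that unfolding g_def ys_def by simp
  have V: "Vmat \<beta> n a h \<rho> \<sigma> $$ (c, i) = v * turning_column (tpair n a ys) i i0 c"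
    if "c < length ys" for c
    using Vmat_index_in_lap[OF H, of c i j i0 \<beta>] that i j i0 unfolding v_def ys_def by simp
  have const: "g (Suc k) = g k" if "Suc k < length ys" "\<not> tpair n a ys k" for k
    unfolding g_def
  proof (rule arg_cong[where f = ind], rule in_lap_Suc_iff_if_not_tpair[OF H])
    show "sorted_wrt (<) ys" unfolding ys_def by (rule sorted_ypts)
    show "endpoints n a \<subseteq> set ys" using set_ys orbit_pts.base by blast
    show "(a 1, True) \<le> y \<and> y \<le> (a (n + 2), False)" if "y \<in> set ys" for y
      using orbit_pts_bounds[OF H] that set_ys by blast
  qed (use that in auto)
  have "(Umat n a h \<rho> \<sigma> * Vmat \<beta> n a h \<rho> \<sigma> *\<^sub>v unit_vec (length ys) i) $ r
      = row (Umat n a h \<rho> \<sigma>) r \<bullet> col (Vmat \<beta> n a h \<rho> \<sigma>) i"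
    using i r unfolding ys_def by simp
  also have "\<dots> = (\<Sum>c<length ys. Umat n a h \<rho> \<sigma> $$ (r, c) * Vmat \<beta> n a h \<rho> \<sigma> $$ (c, i))"
    using i r unfolding ys_def by (simp add: scalar_prod_def lessThan_atLeast0)
  also have "\<dots> = v * (\<Sum>c<length ys. g c * turning_column (tpair n a ys) i i0 c)"
    unfolding sum_distrib_left by (rule sum.cong) (simp_all add: U V)
  also have "(\<Sum>c<length ys. g c * turning_column (tpair n a ys) i i0 c) = g i"
    using sum_turning_column[OF i i0(1)] const by blast
  finally show ?thesis unfolding v_def g_def .
qed

theorem lemma2:
  fixes n h j i1 i2 :: nat and a \<rho> \<sigma> :: "nat \<Rightarrow> real" and \<beta> :: real
  assumes "ifs_with_hole n a h \<rho> \<sigma>"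
    and "finite (orbit_pts n a h \<rho> \<sigma>)"
    and "i1 < length (ypts n a h \<rho> \<sigma>)" and "i2 < length (ypts n a h \<rho> \<sigma>)"
    and "in_lap n a h j (ypts n a h \<rho> \<sigma> ! i1)"
    and "in_lap n a h j (ypts n a h \<rho> \<sigma> ! i2)"
  shows "Umat n a h \<rho> \<sigma> * Vmat \<beta> n a h \<rho> \<sigma> *\<^sub>v unit_vec (length (ypts n a h \<rho> \<sigma>)) i1
       = Umat n a h \<rho> \<sigma> * Vmat \<beta> n a h \<rho> \<sigma> *\<^sub>v unit_vec (length (ypts n a h \<rho> \<sigma>)) i2"
proof (rule eq_vecI)
  fix r
  assume "r < dim_vec (Umat n a h \<rho> \<sigma> * Vmat \<beta> n a h \<rho> \<sigma> *\<^sub>v unit_vec (length (ypts n a h \<rho> \<sigma>)) i2)"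
  then have r: "r < n" by simp
  have "in_lap n a h (Suc r) (ypts n a h \<rho> \<sigma> ! i) \<longleftrightarrow> Suc r = j"
    if "in_lap n a h j (ypts n a h \<rho> \<sigma> ! i)" for i
    using in_lap_unique[OF assms(1) _ that] that by blast
  then show "(Umat n a h \<rho> \<sigma> * Vmat \<beta> n a h \<rho> \<sigma> *\<^sub>v unit_vec (length (ypts n a h \<rho> \<sigma>)) i1) $ r
      = (Umat n a h \<rho> \<sigma> * Vmat \<beta> n a h \<rho> \<sigma> *\<^sub>v unit_vec (length (ypts n a h \<rho> \<sigma>)) i2) $ r"
    using Umat_Vmat_unit_vec_nth[OF assms(1,2,3,5) r] Umat_Vmat_unit_vec_nth[OF assms(1,2,4,6) r]
      assms(5,6) by simp
qed simp

end
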